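(* Assume $f$ is in Case 2. Then, for every sufficiently small $r>0$, $A_f^l=A_0\setminus E_z$ holds for every $l>0$ if $\delta\le d$, and for every $0<l<\alpha$ if $\delta>d$ and $(n_1,m_1)\neq(0,\delta)$.
   Context: Let $f(z,w)=(p(z),q(z,w))$ be a holomorphic skew product defined on $\mathbb{C}^2$ or on $\{|z|<R\}\times\mathbb{C}$, where $R$ is so large that the attracting basin $A_p$ of $p$ at $0$ is relatively compact in $\{|z|<R\}$. Assume $p(z)=az^{\delta}+O(z^{\delta+1})$, $a\neq0$, $\delta\ge2$, and $q(z,w)=\sum_{i,j\ge0}b_{ij}z^iw^j$ with $b_{00}=b_{01}=0$. The Newton polygon $N(q)$ is the convex hull of $\bigcup_{b_{ij}\ne0}\{(x,y):x\ge i,\ y\ge j\}$, with vertices $(n_1,m_1),\dots,(n_s,m_s)$, $n_1<\dots<n_s$, $m_1>\dots>m_s$, $s>1$; $T_{s-1}$ is the $y$-intercept of the line through $(n_{s-1},m_{s-1})$ and $(n_s,m_s)$. Case 2 means $\delta\le T_{s-1}$; set $(\gamma,d)=(n_s,m_s)$ and, when $\delta\ne d$, $\alpha=\gamma/(\delta-d)$. For $l>0$ let $U^l=\{|z|<r,\ |w|<r|z|^l\}$ and $A_f^l=\bigcup_{n\ge0}f^{-n}(U^l)$. $A_0$ is the attracting basin of the origin for $f$, and $E_z=\bigcup_{n\ge0}f^{-n}(\{z=0\})$. *)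

theory Defs
  imports "HOL-Analysis.Analysis" "HOL-Library.Landau_Symbols"
begin

text \<open>Newton polygon of q(z,w) = sum b i j z^i w^j: convex hull of the union of
  the quadrants {x >= i, y >= j} over all (i,j) with b i j nonzero.\<close>
definition newton_polygon :: "(nat \<Rightarrow> nat \<Rightarrow> complex) \<Rightarrow> (real \<times> real) set" where
  "newton_polygon b = convex hull (\<Union> {{(x, y). real i \<le> x \<and> real j \<le> y} | i j. b i j \<noteq> 0})"

definition newton_vertices :: "(nat \<Rightarrow> nat \<Rightarrow> complex) \<Rightarrow> (real \<times> real) set" where
  "newton_vertices b = {v. v extreme_point_of newton_polygon b}"

definition skew :: "(complex \<Rightarrow> complex) \<Rightarrow> (complex \<Rightarrow> complex \<Rightarrow> complex)
    \<Rightarrow> complex \<times> complex \<Rightarrow> complex \<times> complex" where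
  "skew p q = (\<lambda>(z, w). (p z, q z w))"

definition preimage_iter :: "('a \<Rightarrow> 'a) \<Rightarrow> 'a set \<Rightarrow> nat \<Rightarrow> 'a set \<Rightarrow> 'a set" where
  "preimage_iter F Dom n U = {x. (\<forall>k<n. (F ^^ k) x \<in> Dom) \<and> (F ^^ n) x \<in> U}"

definition backward_orbit :: "('a \<Rightarrow> 'a) \<Rightarrow> 'a set \<Rightarrow> 'a set \<Rightarrow> 'a set" where
  "backward_orbit F Dom U = (\<Union>n. preimage_iter F Dom n U)"

definition basin :: "('a::topological_space \<Rightarrow> 'a) \<Rightarrow> 'a set \<Rightarrow> 'a \<Rightarrow> 'a set" where
  "basin F Dom c = {x. (\<forall>n. (F ^^ n) x \<in> Dom) \<and> (\<lambda>n. (F ^^ n) x) \<longlonglongrightarrow> c}"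

definition Uset :: "real \<Rightarrow> real \<Rightarrow> (complex \<times> complex) set" where
  "Uset r l = {(z, w). norm z < r \<and> norm w < r * norm z powr l}"

end

theory Submission
  imports Defs
begin

(* Near the origin the skew product contracts (|p z| is of order |z|^delta and
   |q z w| of order |z| + |w|^2), so U^l lies in the basin A_0 and its orbits never meet
   {z = 0}; hence A_f^l is contained in A_0 - E_z.  Conversely, suppose an orbit (z_n, w_n)
   in A_0 - E_z never enters U^l, i.e. |w_n| >= r |z_n|^l.  The Newton polygon hypotheses
   (Case 2 together with the bound on l) give l' > l and e > delta such that every monomial
   z^i w^j of q has weighted degree i/l' + j >= e, so |q z w| is of order |w|^e wherever
   |z|^l' <= |w|.  In the coordinates Z_n = -ln |z_n| and W_n = -ln |w_n| this says that
   Z grows at most like delta^n, whereas W, which is eventually at most l' Z, grows faster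
   than any multiple of Z can: a contradiction. *)

section \<open>The Newton polygon\<close>

lemma newton_polygon_memI:
  assumes "b i j \<noteq> 0" "real i \<le> x" "real j \<le> y"
  shows "(x, y) \<in> newton_polygon b"
  unfolding newton_polygon_def
  by (rule hull_subset[THEN subsetD]) (use assms in blast)

lemma convex_newton_polygon: "convex (newton_polygon b)"
  unfolding newton_polygon_def by (rule convex_convex_hull)

lemma newton_polygon_linear_lower_bound:
  assumes u: "0 \<le> u" and v: "0 \<le> v"
    and support: "\<And>i j. b i j \<noteq> 0 \<Longrightarrow> c \<le> u * real i + v * real j"
    and xy: "(x, y) \<in> newton_polygon b"
  shows "c \<le> u * x + v * y"
proof -
  have "newton_polygon b \<subseteq> {p. c \<le> (u, v) \<bullet> p}"
    unfolding newton_polygon_def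
  proof (rule hull_minimal)
    show "convex {p. c \<le> (u, v) \<bullet> p}" by (rule convex_halfspace_ge)
    show "\<Union> {{(x, y). real i \<le> x \<and> real j \<le> y} | i j. b i j \<noteq> 0} \<subseteq> {p. c \<le> (u, v) \<bullet> p}"
    proof clarify
      fix x y i j assume "b i j \<noteq> 0" "real i \<le> x" "real j \<le> y"
      then have "c \<le> u * real i + v * real j" "u * real i + v * real j \<le> u * x + v * y"
        using support u v by (auto intro!: add_mono mult_left_mono)
      then show "c \<le> (u, v) \<bullet> (x, y)" by simp
    qed
  qed
  with xy show ?thesis by auto
qed

lemma newton_polygon_fst_nonneg: "(x, y) \<in> newton_polygon b \<Longrightarrow> 0 \<le> x"
  using newton_polygon_linear_lower_bound[where u = 1 and v = 0 and c = 0] by simp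

lemma newton_polygon_upward_closed:
  assumes xy: "(x, y) \<in> newton_polygon b" and "x \<le> x'" "y \<le> y'"
  shows "(x', y') \<in> newton_polygon b"
proof -
  let ?N = "newton_polygon b"
  let ?Q = "\<lambda>p. \<forall>dx dy. 0 \<le> dx \<longrightarrow> 0 \<le> dy \<longrightarrow> p + (dx, dy) \<in> ?N"
  have "?Q (x, y)"
    using xy[unfolded newton_polygon_def]
  proof (rule hull_induct)
    show "?Q p" if "p \<in> \<Union> {{(x, y). real i \<le> x \<and> real j \<le> y} | i j. b i j \<noteq> 0}" for p
      using that by (fastforce intro: newton_polygon_memI)
    show "convex {p. ?Q p}"
      unfolding convex_def
    proof clarify
      fix p1 p2 :: "real \<times> real" and s t dx dy :: real
      assume "?Q p1" "?Q p2" "0 \<le> s" "0 \<le> t" "s + t = 1" "0 \<le> dx" "0 \<le> dy"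
      then have "s *\<^sub>R (p1 + (dx, dy)) + t *\<^sub>R (p2 + (dx, dy)) \<in> ?N"
        by (intro convexD[OF convex_newton_polygon]) auto
      moreover have "s *\<^sub>R (p1 + (dx, dy)) + t *\<^sub>R (p2 + (dx, dy))
          = s *\<^sub>R p1 + t *\<^sub>R p2 + (s + t) *\<^sub>R (dx, dy)"
        by (simp only: scaleR_add_left scaleR_add_right add_ac)
      ultimately show "s *\<^sub>R p1 + t *\<^sub>R p2 + (dx, dy) \<in> ?N" using \<open>s + t = 1\<close> by simp
    qed
  qed
  then have "(x, y) + (x' - x, y' - y) \<in> ?N" using assms(2,3) by (simp only: diff_ge_0_iff_ge)
  then show ?thesis by simp
qed

lemma midpoint_not_extreme_point:
  assumes "a \<in> S" "c \<in> S" "a \<noteq> c"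
  shows "\<not> midpoint a c extreme_point_of S"
  using assms unfolding extreme_point_of_def by (metis midpoint_in_open_segment)

lemma newton_extreme_point_lowest:
  assumes ext: "(x, y) extreme_point_of newton_polygon b" and xy': "(x, y') \<in> newton_polygon b"
  shows "y \<le> y'"
proof (rule ccontr)
  assume "\<not> y \<le> y'"
  then have "(x, 2 * y - y') \<in> newton_polygon b" "(x, y') \<noteq> (x, 2 * y - y')"
    using newton_polygon_upward_closed[OF xy'] by auto
  then have "\<not> midpoint (x, y') (x, 2 * y - y') extreme_point_of newton_polygon b"
    using xy' by (intro midpoint_not_extreme_point)
  moreover have "midpoint (x, y') (x, 2 * y - y') = (x, y)" by (simp add: midpoint_def)
  ultimately show False using ext by simp
qed

lemma newton_extreme_point_leftmost:
  assumes ext: "(x, y) extreme_point_of newton_polygon b" and x'y: "(x', y) \<in> newton_polygon b"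
  shows "x \<le> x'"
proof (rule ccontr)
  assume "\<not> x \<le> x'"
  then have "(2 * x - x', y) \<in> newton_polygon b" "(x', y) \<noteq> (2 * x - x', y)"
    using newton_polygon_upward_closed[OF x'y] by auto
  then have "\<not> midpoint (x', y) (2 * x - x', y) extreme_point_of newton_polygon b"
    using x'y by (intro midpoint_not_extreme_point)
  moreover have "midpoint (x', y) (2 * x - x', y) = (x, y)" by (simp add: midpoint_def)
  ultimately show False using ext by simp
qed

lemma supporting_line_contains_segment:
  fixes u v t :: real
  assumes "u * px + v * py \<le> u * x + v * y" "u * px + v * py \<le> u * x' + v * y'"
    and t: "0 < t" "t < 1" and e: "(px, py) = (1 - t) *\<^sub>R (x, y) + t *\<^sub>R (x', y')"
  shows "u * x + v * y = u * px + v * py"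
proof -
  have ex: "px = (1 - t) * x + t * x'" and ey: "py = (1 - t) * y + t * y'" using e by auto
  have "(1 - t) * (u * x + v * y - (u * px + v * py)) + t * (u * x' + v * y' - (u * px + v * py)) = 0"
    unfolding ex ey by (simp add: algebra_simps)
  then have "(1 - t) * (u * x + v * y - (u * px + v * py)) = 0"
    using assms(1,2) t by (smt (verit) mult_nonneg_nonneg)
  then show ?thesis using t by simp
qed

lemma extreme_point_of_two_supporting_lines:
  fixes S :: "(real \<times> real) set"
  assumes pS: "(px, py) \<in> S"
    and h1: "\<And>x y. (x, y) \<in> S \<Longrightarrow> ua * px + va * py \<le> ua * x + va * y"
    and h2: "\<And>x y. (x, y) \<in> S \<Longrightarrow> ub * px + vb * py \<le> ub * x + vb * y"
    and det: "ua * vb - ub * va \<noteq> 0"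
  shows "(px, py) extreme_point_of S"
proof -
  have endpoint: "a = (px, py)"
    if "a \<in> S" "c \<in> S" "0 < t" "t < 1" "(px, py) = (1 - t) *\<^sub>R a + t *\<^sub>R c" for a c t
  proof -
    obtain x y x' y' where "a = (x, y)" "c = (x', y')" by (cases a, cases c)
    with that have a: "(x, y) \<in> S" and c: "(x', y') \<in> S" and t: "0 < t" "t < 1"
      and e: "(px, py) = (1 - t) *\<^sub>R (x, y) + t *\<^sub>R (x', y')" by auto
    have "ua * x + va * y = ua * px + va * py" "ub * x + vb * y = ub * px + vb * py"
      using supporting_line_contains_segment[OF _ _ t e] h1 h2 a c by blast+
    then have q1: "ua * (x - px) + va * (y - py) = 0" and q2: "ub * (x - px) + vb * (y - py) = 0"
      by (simp_all add: algebra_simps)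
    have "(ua * vb - ub * va) * (x - px) = vb * (ua * (x - px) + va * (y - py)) - va * (ub * (x - px) + vb * (y - py))"
      "(ua * vb - ub * va) * (y - py) = ua * (ub * (x - px) + vb * (y - py)) - ub * (ua * (x - px) + va * (y - py))"
      by (simp_all add: algebra_simps)
    then have "(ua * vb - ub * va) * (x - px) = 0" "(ua * vb - ub * va) * (y - py) = 0"
      unfolding q1 q2 by simp_all
    with det \<open>a = (x, y)\<close> show ?thesis by simp
  qed
  show ?thesis
    unfolding extreme_point_of_def
  proof (intro conjI ballI pS notI)
    fix a c assume a: "a \<in> S" and c: "c \<in> S" and "(px, py) \<in> open_segment a c"
    then obtain t where ne: "a \<noteq> c" and t: "0 < t" "t < 1" and e: "(px, py) = (1 - t) *\<^sub>R a + t *\<^sub>R c"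
      unfolding in_segment by blast
    have "(px, py) = (1 - (1 - t)) *\<^sub>R c + (1 - t) *\<^sub>R a" using e by (simp add: algebra_simps)
    then have "c = (px, py)" by (rule endpoint[OF c a, rotated 2]) (use t in auto)
    moreover have "a = (px, py)" using endpoint[OF a c t e] .
    ultimately show False using ne by simp
  qed
qed

lemma newton_extreme_point_if_isolated_min:
  assumes b0: "b i0 j0 \<noteq> 0" and A: "A \<ge> 0" and B: "B > 0" and g: "g > 0"
    and lb: "\<And>i j. b i j \<noteq> 0 \<Longrightarrow> m \<le> A * real i + B * real j"
    and eq: "A * real i0 + B * real j0 = m"
    and leftmost: "\<And>i j. b i j \<noteq> 0 \<Longrightarrow> A * real i + B * real j = m \<Longrightarrow> i0 \<le> i"
    and gap: "\<And>i j. b i j \<noteq> 0 \<Longrightarrow> m < A * real i + B * real j \<Longrightarrow> m + g \<le> A * real i + B * real j"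
  shows "(real i0, real j0) extreme_point_of newton_polygon b"
proof -
  \<comment> \<open>the second supporting line is the first one tilted by the slope K, small enough thanks to the gap\<close>
  define K where "K = (real i0 + 1) / g"
  have K: "K \<ge> 0" and Kg: "K * g = real i0 + 1" unfolding K_def using g by auto
  show ?thesis
  proof (rule extreme_point_of_two_supporting_lines[where ua = A and va = B and ub = "1 + K * A" and vb = "K * B"])
    show "(real i0, real j0) \<in> newton_polygon b" using b0 by (rule newton_polygon_memI) auto
    fix x y assume xy: "(x, y) \<in> newton_polygon b"
    show "A * real i0 + B * real j0 \<le> A * x + B * y"
      by (rule newton_polygon_linear_lower_bound[OF A _ _ xy]) (use B lb eq in auto)
    show "(1 + K * A) * real i0 + K * B * real j0 \<le> (1 + K * A) * x + K * B * y"
    proof (rule newton_polygon_linear_lower_bound[OF _ _ _ xy])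
      show "0 \<le> 1 + K * A" "0 \<le> K * B" using K A B by simp_all
      fix i j assume bij: "b i j \<noteq> 0"
      have "(1 + K * A) * real i0 + K * B * real j0 = real i0 + K * m"
        using eq[symmetric] by (simp add: algebra_simps)
      moreover have "(1 + K * A) * real i + K * B * real j = real i + K * (A * real i + B * real j)"
        by (simp add: algebra_simps)
      moreover have "real i0 + K * m \<le> real i + K * (A * real i + B * real j)"
      proof (cases "A * real i + B * real j = m")
        case True
        then show ?thesis using leftmost[OF bij] by simp
      next
        case False
        then have "K * (m + g) \<le> K * (A * real i + B * real j)"
          using lb[OF bij] gap[OF bij] K by (intro mult_left_mono) auto
        then show ?thesis using Kg by (simp add: algebra_simps)
      qed
      ultimately show "(1 + K * A) * real i0 + K * B * real j0 \<le> (1 + K * A) * real i + K * B * real j"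
        by simp
    qed
  qed (use B in \<open>simp add: algebra_simps\<close>)
qed

lemma exists_newton_vertex_min_snd:
  assumes "b i0 j0 \<noteq> 0"
  obtains i1 j1 where "b i1 j1 \<noteq> 0" "\<And>i j. b i j \<noteq> 0 \<Longrightarrow> j1 \<le> j"
    "(real i1, real j1) extreme_point_of newton_polygon b"
proof -
  define j1 where "j1 = (LEAST j. \<exists>i. b i j \<noteq> 0)"
  have ex1: "\<exists>i. b i j1 \<noteq> 0" unfolding j1_def by (rule LeastI_ex) (use assms in blast)
  have min1: "j1 \<le> j" if "b i j \<noteq> 0" for i j unfolding j1_def by (rule Least_le) (use that in blast)
  define i1 where "i1 = (LEAST i. b i j1 \<noteq> 0)"
  have b1: "b i1 j1 \<noteq> 0" unfolding i1_def by (rule LeastI_ex) (use ex1 in blast)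
  have min2: "i1 \<le> i" if "b i j1 \<noteq> 0" for i unfolding i1_def by (rule Least_le) (use that in blast)
  have "(real i1, real j1) extreme_point_of newton_polygon b"
    by (rule newton_extreme_point_if_isolated_min[where A = 0 and B = 1 and g = 1 and m = "real j1"])
      (use b1 min1 min2 in auto)
  with b1 min1 that show ?thesis by blast
qed

lemma exists_linear_min_with_gap:
  fixes A B :: real
  assumes b0: "b i0 j0 \<noteq> 0" and A: "A > 0" and B: "B > 0"
  obtains g m where "0 < g" "m \<le> A * real i0 + B * real j0"
    "\<And>i j. b i j \<noteq> 0 \<Longrightarrow> m \<le> A * real i + B * real j"
    "\<exists>i j. b i j \<noteq> 0 \<and> A * real i + B * real j = m"
    "\<And>i j. b i j \<noteq> 0 \<Longrightarrow> m < A * real i + B * real j \<Longrightarrow> m + g \<le> A * real i + B * real j"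
proof -
  define \<psi> where "\<psi> = (\<lambda>(i::nat, j::nat). A * real i + B * real j)"
  define c0 where "c0 = \<psi> (i0, j0) + 1"
  \<comment> \<open>only finitely many exponents lie below the line \<psi> = c0\<close>
  define F where "F = {(i, j). b i j \<noteq> 0 \<and> \<psi> (i, j) \<le> c0}"
  define N where "N = nat \<lceil>c0 / A + c0 / B\<rceil>"
  have "F \<subseteq> {..N} \<times> {..N}"
  proof clarify
    fix i j assume "(i, j) \<in> F"
    then have "A * real i + B * real j \<le> c0" unfolding F_def \<psi>_def by simp
    then have "A * real i \<le> c0" "B * real j \<le> c0" "0 \<le> c0"
      using A B by (smt (verit) mult_nonneg_nonneg of_nat_0_le_iff)+
    then have "real i \<le> c0 / A" "real j \<le> c0 / B" "0 \<le> c0 / A" "0 \<le> c0 / B"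
      using A B by (simp_all add: field_simps)
    then have "real i \<le> real N" "real j \<le> real N" unfolding N_def by linarith+
    then show "i \<in> {..N} \<and> j \<in> {..N}" by simp
  qed
  then have finF: "finite F" by (rule finite_subset) simp
  have i0F: "(i0, j0) \<in> F" using b0 unfolding F_def c0_def by simp
  define m where "m = Min (\<psi> ` F)"
  have mle: "m \<le> \<psi> s" if "s \<in> F" for s unfolding m_def using finF that by simp
  have "m \<in> \<psi> ` F" unfolding m_def using finF i0F by (intro Min_in) auto
  then have attained: "\<exists>i j. b i j \<noteq> 0 \<and> \<psi> (i, j) = m" unfolding F_def by auto
  have mc0: "m \<le> c0 - 1" using mle[OF i0F] unfolding c0_def by simp
  have lb: "m \<le> \<psi> (i, j)" if "b i j \<noteq> 0" for i j
    using mle[of "(i, j)"] mc0 that unfolding F_def by force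
  define G where "G = (\<lambda>v. v - m) ` {v \<in> \<psi> ` F. m < v}"
  have finG: "finite G" unfolding G_def using finF by simp
  define g where "g = Min (insert 1 G)"
  have gpos: "g > 0" unfolding g_def using finG by (subst Min_gr_iff) (auto simp: G_def)
  have g1: "g \<le> 1" unfolding g_def using finG by simp
  have gap: "m + g \<le> \<psi> (i, j)" if "b i j \<noteq> 0" "m < \<psi> (i, j)" for i j
  proof (cases "(i, j) \<in> F")
    case True
    then have "\<psi> (i, j) - m \<in> G" unfolding G_def using that by auto
    then have "g \<le> \<psi> (i, j) - m" unfolding g_def using finG by simp
    then show ?thesis by simp
  next
    case False
    then show ?thesis using that mc0 g1 unfolding F_def by auto
  qed
  show ?thesis
  proof (rule that)
    show "m \<le> A * real i0 + B * real j0" using mle[OF i0F] unfolding \<psi>_def by simp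
    show "m \<le> A * real i + B * real j" if "b i j \<noteq> 0" for i j using lb[OF that] unfolding \<psi>_def by simp
    show "\<exists>i j. b i j \<noteq> 0 \<and> A * real i + B * real j = m" using attained unfolding \<psi>_def by simp
    show "m + g \<le> A * real i + B * real j" if "b i j \<noteq> 0" "m < A * real i + B * real j" for i j
      using gap[OF that(1)] that(2) unfolding \<psi>_def by simp
  qed (rule gpos)
qed

lemma exists_newton_vertex_below_line:
  assumes b0: "b i0 j0 \<noteq> 0" and A: "A > 0" and B: "B > 0"
  obtains i1 j1 where "b i1 j1 \<noteq> 0" "A * real i1 + B * real j1 \<le> A * real i0 + B * real j0"
    "(real i1, real j1) extreme_point_of newton_polygon b"
proof -
  obtain g m where g: "0 < g" and m: "m \<le> A * real i0 + B * real j0"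
    and lb: "\<And>i j. b i j \<noteq> 0 \<Longrightarrow> m \<le> A * real i + B * real j"
    and attained: "\<exists>i j. b i j \<noteq> 0 \<and> A * real i + B * real j = m"
    and gap: "\<And>i j. b i j \<noteq> 0 \<Longrightarrow> m < A * real i + B * real j \<Longrightarrow> m + g \<le> A * real i + B * real j"
    using exists_linear_min_with_gap[of b i0 j0, OF b0 A B] by blast
  define i1 where "i1 = (LEAST i. \<exists>j. b i j \<noteq> 0 \<and> A * real i + B * real j = m)"
  have "\<exists>j. b i1 j \<noteq> 0 \<and> A * real i1 + B * real j = m"
    unfolding i1_def by (rule LeastI_ex) (use attained in blast)
  then obtain j1 where j1: "b i1 j1 \<noteq> 0" "A * real i1 + B * real j1 = m" by blast
  have leftmost: "i1 \<le> i" if "b i j \<noteq> 0" "A * real i + B * real j = m" for i j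
    unfolding i1_def by (rule Least_le) (use that in blast)
  have "(real i1, real j1) extreme_point_of newton_polygon b"
    by (rule newton_extreme_point_if_isolated_min[of b i1 j1 A B g m, OF j1(1) _ B g lb j1(2) leftmost gap])
      (use A in simp)
  then show ?thesis using j1 m by (intro that[of i1 j1]) simp_all
qed

text \<open>Giving z the weight 1/l and w the weight 1, every monomial of q has weighted degree at
  least e; this makes q(z, w) = O(|w|^e) on the region |z|^l \<le> |w|.\<close>

definition weighted_order_ge :: "(nat \<Rightarrow> nat \<Rightarrow> 'a::zero) \<Rightarrow> real \<Rightarrow> real \<Rightarrow> bool" where
  "weighted_order_ge b l e \<longleftrightarrow> (\<forall>i j. b i j \<noteq> 0 \<longrightarrow> e \<le> real i / l + real j)"

locale newton_last_edge =
  fixes b :: "nat \<Rightarrow> nat \<Rightarrow> complex" and ns1 ms1 ns ms :: real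
  assumes second_last_vertex: "(ns1, ms1) \<in> newton_vertices b"
    and last_vertex: "(ns, ms) \<in> newton_vertices b"
    and fst_less: "ns1 < ns"
    and last_rightmost: "\<forall>v\<in>newton_vertices b. fst v \<le> ns"
    and second_last_rightmost: "\<forall>v\<in>newton_vertices b - {(ns, ms)}. fst v \<le> ns1"
begin

lemma last_extreme: "(ns, ms) extreme_point_of newton_polygon b"
  and second_last_extreme: "(ns1, ms1) extreme_point_of newton_polygon b"
  using last_vertex second_last_vertex unfolding newton_vertices_def by simp_all

lemma last_in_polygon: "(ns, ms) \<in> newton_polygon b"
  and second_last_in_polygon: "(ns1, ms1) \<in> newton_polygon b"
  using last_extreme second_last_extreme unfolding extreme_point_of_def by simp_all

lemma second_last_fst_nonneg: "0 \<le> ns1"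
  using newton_polygon_fst_nonneg[OF second_last_in_polygon] .

lemma support_above_last_vertex:
  assumes "b i j \<noteq> 0"
  shows "ms \<le> real j"
proof -
  obtain i2 j2 where b2: "b i2 j2 \<noteq> 0" and lowest: "\<And>i j. b i j \<noteq> 0 \<Longrightarrow> j2 \<le> j"
    and ext: "(real i2, real j2) extreme_point_of newton_polygon b"
    using exists_newton_vertex_min_snd[of b i j, OF assms] by blast
  have "real i2 \<le> ns" using last_rightmost ext unfolding newton_vertices_def by auto
  then have "(ns, real j2) \<in> newton_polygon b" using b2 by (intro newton_polygon_memI) auto
  then have "ms \<le> real j2" by (rule newton_extreme_point_lowest[OF last_extreme])
  also have "\<dots> \<le> real j" using lowest[OF assms] by simp
  finally show ?thesis .
qed

lemma last_edge_descends: "ms < ms1"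
proof -
  have "ms \<le> ms1"
    using newton_polygon_linear_lower_bound[where u = 0 and v = 1 and c = ms, OF _ _ _ second_last_in_polygon]
      support_above_last_vertex by simp
  moreover have "ms1 \<noteq> ms"
  proof
    assume "ms1 = ms"
    then have "(ns1, ms) \<in> newton_polygon b" using second_last_in_polygon by simp
    then have "ns \<le> ns1" by (rule newton_extreme_point_leftmost[OF last_extreme])
    with fst_less show False by simp
  qed
  ultimately show ?thesis by simp
qed

lemma support_above_last_edge:
  assumes bij: "b i j \<noteq> 0"
  shows "(ms1 - ms) * ns + (ns - ns1) * ms \<le> (ms1 - ms) * real i + (ns - ns1) * real j"
proof (rule ccontr)
  define A where "A = ms1 - ms"
  define B where "B = ns - ns1"
  have A: "A > 0" and B: "B > 0" using last_edge_descends fst_less unfolding A_def B_def by simp_all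
  define c where "c = A * ns + B * ms"
  have c1: "c = A * ns1 + B * ms1" unfolding c_def A_def B_def by (simp add: algebra_simps)
  assume "\<not> ?thesis"
  then have "A * real i + B * real j < c" unfolding A_def B_def c_def by simp
  \<comment> \<open>a vertex strictly below the line would lie left of ns1, and the segment from it to (ns, ms)
     would pass strictly below (ns1, ms1)\<close>
  then obtain i1 j1 where b1: "b i1 j1 \<noteq> 0" and below: "A * real i1 + B * real j1 < c"
    and e1: "(real i1, real j1) extreme_point_of newton_polygon b"
    using exists_newton_vertex_below_line[of b i j, OF bij A B] by (smt (verit))
  have "(real i1, real j1) \<noteq> (ns, ms)" using below unfolding c_def by auto
  then have i1le: "real i1 \<le> ns1"
    using second_last_rightmost e1 unfolding newton_vertices_def by force
  define t where "t = (ns1 - real i1) / (ns - real i1)"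
  have den: "ns - real i1 > 0" using i1le fst_less by simp
  have t0: "0 \<le> t" and t1: "t < 1" unfolding t_def using den i1le fst_less by (simp_all add: field_simps)
  have xq: "(1 - t) * real i1 + t * ns = ns1"
  proof -
    have "t * (ns - real i1) = ns1 - real i1" unfolding t_def using den by simp
    then show ?thesis by (simp add: algebra_simps)
  qed
  define yq where "yq = (1 - t) * real j1 + t * ms"
  have "(1 - t) *\<^sub>R (real i1, real j1) + t *\<^sub>R (ns, ms) \<in> newton_polygon b"
    using e1 last_in_polygon t0 t1 unfolding extreme_point_of_def
    by (intro convexD[OF convex_newton_polygon]) auto
  then have "(ns1, yq) \<in> newton_polygon b" using xq unfolding yq_def by simp
  then have "ms1 \<le> yq" by (rule newton_extreme_point_lowest[OF second_last_extreme])
  then have "B * ms1 \<le> B * yq" using B by simp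
  moreover have "A * ns1 + B * yq = (1 - t) * (A * real i1 + B * real j1) + t * c"
    unfolding yq_def c_def xq[symmetric] by (simp add: algebra_simps)
  moreover have "(1 - t) * (A * real i1 + B * real j1) < (1 - t) * c"
    using below t1 by (intro mult_strict_left_mono) auto
  ultimately have "B * ms1 < B * ms1" using c1 by (simp add: algebra_simps)
  then show False by simp
qed

lemma weighted_order_gap_if_delta_le:
  assumes dle: "real \<delta> \<le> ms" and l: "0 < l"
  shows "\<exists>l'>l. \<exists>e>real \<delta>. weighted_order_ge b l' e"
proof -
  define l' where "l' = l + 1"
  have l': "0 < l'" "l < l'" unfolding l'_def using l by simp_all
  have "weighted_order_ge b l' (real \<delta> + min 1 (1 / l'))"
    unfolding weighted_order_ge_def
  proof (intro allI impI)
    fix i j assume bij: "b i j \<noteq> 0"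
    have jms: "ms \<le> real j" using support_above_last_vertex[OF bij] .
    show "real \<delta> + min 1 (1 / l') \<le> real i / l' + real j"
    proof (cases "j = \<delta>")
      case True
      then have "real j = ms" using jms dle by simp
      then have "(ms1 - ms) * ns \<le> (ms1 - ms) * real i" using support_above_last_edge[OF bij] by simp
      then have "ns \<le> real i" using last_edge_descends by simp
      then have "i \<noteq> 0" using second_last_fst_nonneg fst_less by auto
      then have "1 \<le> real i" by simp
      then have "1 / l' \<le> real i / l'" using l' by (simp add: divide_right_mono)
      then show ?thesis using True by linarith
    next
      case False
      then have "real \<delta> + 1 \<le> real j" using jms dle by linarith
      moreover have "0 \<le> real i / l'" using l' by simp
      ultimately show ?thesis by linarith
    qed
  qed
  moreover have "real \<delta> < real \<delta> + min 1 (1 / l')" using l' by simp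
  ultimately show ?thesis using l' by blast
qed

lemma case2_support_above_line:
  assumes case2: "real \<delta> \<le> ms1 + ns1 * (ms1 - ms) / (ns - ns1)"
    and dge: "ms \<le> real \<delta>" and bij: "b i j \<noteq> 0"
  shows "ns * (real \<delta> - real j) \<le> real i * (real \<delta> - ms)"
proof -
  define A where "A = ms1 - ms"
  define B where "B = ns - ns1"
  have A: "A > 0" and B: "B > 0" using last_edge_descends fst_less unfolding A_def B_def by simp_all
  have "real \<delta> * B \<le> (ms1 + ns1 * A / B) * B" using case2 B unfolding A_def B_def
    by (intro mult_right_mono) auto
  then have "B * real \<delta> \<le> B * ms1 + ns1 * A" using B by (simp add: algebra_simps)
  also have "B * ms1 + ns1 * A = A * ns + B * ms" unfolding A_def B_def by (simp add: algebra_simps)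
  finally have slope: "0 \<le> A * ns - B * (real \<delta> - ms)" by (simp add: algebra_simps)
  have "(real \<delta> - ms) * (A * ns + B * ms - B * real j) \<le> (real \<delta> - ms) * (A * real i)"
    using support_above_last_edge[OF bij] dge unfolding A_def B_def by (intro mult_left_mono) auto
  moreover have "(real \<delta> - ms) * (A * ns + B * ms - B * real j) - A * ns * (real \<delta> - real j)
      = (real j - ms) * (A * ns - B * (real \<delta> - ms))" by (simp add: algebra_simps)
  moreover have "0 \<le> (real j - ms) * (A * ns - B * (real \<delta> - ms))"
    using support_above_last_vertex[OF bij] slope by simp
  ultimately have "A * (ns * (real \<delta> - real j)) \<le> A * (real i * (real \<delta> - ms))"
    by (simp add: algebra_simps)
  then show ?thesis using A by simp
qed

lemma case2_delta_exponent_is_first_vertex: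
  assumes case2: "real \<delta> \<le> ms1 + ns1 * (ms1 - ms) / (ns - ns1)"
    and v1: "(n1, m1) \<in> newton_vertices b"
    and first: "\<forall>v\<in>newton_vertices b. n1 \<le> fst v"
    and b0: "b 0 \<delta> \<noteq> 0"
  shows "(n1, m1) = (0, real \<delta>)"
proof -
  let ?N = "newton_polygon b"
  have v1E: "(n1, m1) extreme_point_of ?N" using v1 unfolding newton_vertices_def by simp
  then have v1N: "(n1, m1) \<in> ?N" unfolding extreme_point_of_def by simp
  have d0N: "(0, real \<delta>) \<in> ?N" by (rule newton_polygon_memI[of b 0 \<delta>, OF b0]) auto
  have dge: "ms \<le> real \<delta>" using support_above_last_vertex[OF b0] .
  have nspos: "0 < ns" using second_last_fst_nonneg fst_less by simp
  have "0 \<le> n1" "n1 \<le> ns1"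
    using newton_polygon_fst_nonneg[OF v1N] first second_last_vertex by force+
  define t where "t = n1 / ns"
  have t0: "0 \<le> t" and t1: "t < 1" and tn: "t * ns = n1"
    unfolding t_def using \<open>0 \<le> n1\<close> \<open>n1 \<le> ns1\<close> fst_less nspos by (simp_all add: field_simps)
  define yq where "yq = (1 - t) * real \<delta> + t * ms"
  have q_eq: "(1 - t) *\<^sub>R (0, real \<delta>) + t *\<^sub>R (ns, ms) = (n1, yq)"
    using tn unfolding yq_def by (simp add: mult.commute)
  have "(1 - t) *\<^sub>R (0, real \<delta>) + t *\<^sub>R (ns, ms) \<in> ?N"
    using d0N last_in_polygon t0 t1 by (intro convexD[OF convex_newton_polygon]) auto
  then have "m1 \<le> yq" using q_eq newton_extreme_point_lowest[OF v1E] by simp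
  moreover have "ns * (real \<delta> - m1) \<le> n1 * (real \<delta> - ms)"
    using newton_polygon_linear_lower_bound[where u = "real \<delta> - ms" and v = ns
        and c = "ns * real \<delta>", OF _ _ _ v1N] case2_support_above_line[OF case2 dge] dge nspos
    by (simp add: algebra_simps)
  then have "ns * yq \<le> ns * m1" unfolding yq_def tn[symmetric] by (simp add: algebra_simps)
  then have "yq \<le> m1" using nspos by simp
  ultimately have v1_eq: "(n1, m1) = (1 - t) *\<^sub>R (0, real \<delta>) + t *\<^sub>R (ns, ms)" using q_eq by simp
  have "t = 0"
  proof (rule ccontr)
    assume "t \<noteq> 0"
    then have "(n1, m1) \<in> open_segment (0, real \<delta>) (ns, ms)"
      unfolding in_segment using v1_eq nspos t0 t1 by auto
    then show False using v1E d0N last_in_polygon unfolding extreme_point_of_def by blast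
  qed
  then show ?thesis using v1_eq by simp
qed

lemma weighted_order_gap_if_delta_gt:
  assumes case2: "real \<delta> \<le> ms1 + ns1 * (ms1 - ms) / (ns - ns1)"
    and dgt: "ms < real \<delta>" and b0: "b 0 \<delta> = 0"
    and l: "0 < l" and l_less: "l < ns / (real \<delta> - ms)"
  shows "\<exists>l'>l. \<exists>e>real \<delta>. weighted_order_ge b l' e"
proof -
  define \<alpha> where "\<alpha> = ns / (real \<delta> - ms)"
  define l' where "l' = (l + \<alpha>) / 2"
  have "l < \<alpha>" using l_less unfolding \<alpha>_def .
  then have l': "0 < l'" "l < l'" "l' < \<alpha>" using l unfolding l'_def by simp_all
  define e where "e = real \<delta> + min 1 (min (1 / l') (\<alpha> / l' - 1))"
  have "weighted_order_ge b l' e"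
    unfolding weighted_order_ge_def
  proof (intro allI impI)
    fix i j assume bij: "b i j \<noteq> 0"
    consider "j < \<delta>" | "j = \<delta>" | "\<delta> < j" by linarith
    then show "e \<le> real i / l' + real j"
    proof cases
      case 1
      have "\<alpha> * (real \<delta> - real j) \<le> real i"
        using case2_support_above_line[OF case2 _ bij] dgt unfolding \<alpha>_def by (simp add: field_simps)
      then have i_bound: "\<alpha> * (real \<delta> - real j) / l' \<le> real i / l'" using l' by (intro divide_right_mono) auto
      have "e \<le> real \<delta> + (\<alpha> / l' - 1)" unfolding e_def by simp
      also have "\<dots> \<le> real \<delta> + (\<alpha> / l' - 1) * (real \<delta> - real j)"
        using 1 l' by (simp add: mult_le_cancel_left1)
      also have "\<dots> = real \<delta> + \<alpha> * (real \<delta> - real j) / l' - (real \<delta> - real j)"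
        by (simp add: algebra_simps add_divide_distrib[symmetric])
      also have "\<dots> \<le> real i / l' + real j" using i_bound by simp
      finally show ?thesis .
    next
      case 2
      then have "i \<noteq> 0" using b0 bij by (cases i) auto
      then have "1 / l' \<le> real i / l'" using l' by (simp add: divide_right_mono)
      then show ?thesis using 2 unfolding e_def by linarith
    next
      case 3
      then have "real \<delta> + 1 \<le> real j" by linarith
      moreover have "0 \<le> real i / l'" using l' by simp
      ultimately show ?thesis unfolding e_def by linarith
    qed
  qed
  moreover have "real \<delta> < e" using l' unfolding e_def by (simp add: field_simps)
  ultimately show ?thesis using l' by blast
qed

end

section \<open>Estimates near the origin\<close>

lemma leading_term_bounds:
  fixes f :: "'a::real_normed_field \<Rightarrow> 'a"
  assumes a: "a \<noteq> 0" and cont: "isCont f 0" and \<delta>: "1 \<le> \<delta>"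
    and expand: "(\<lambda>z. f z - a * z ^ \<delta>) \<in> O[at 0](\<lambda>z. z ^ (\<delta> + 1))"
  shows "f 0 = 0"
    and "\<exists>\<rho>>0. \<forall>z. norm z < \<rho> \<longrightarrow>
           norm a / 2 * norm z ^ \<delta> \<le> norm (f z) \<and> norm (f z) \<le> 2 * norm a * norm z ^ \<delta>"
proof -
  obtain c where c: "c > 0" and "\<forall>\<^sub>F z in at 0. norm (f z - a * z ^ \<delta>) \<le> c * norm (z ^ (\<delta> + 1))"
    using landau_o.bigE[OF expand] by blast
  then obtain d where d: "d > 0"
    and err: "\<And>z. z \<noteq> 0 \<Longrightarrow> norm z < d \<Longrightarrow> norm (f z - a * z ^ \<delta>) \<le> c * norm z * norm z ^ \<delta>"
    unfolding eventually_at by (auto simp: norm_mult norm_power mult_ac)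
  define \<rho> where "\<rho> = min d (norm a / (2 * c))"
  have \<rho>: "\<rho> > 0" unfolding \<rho>_def using d c a by simp
  have bounds: "norm a / 2 * norm z ^ \<delta> \<le> norm (f z) \<and> norm (f z) \<le> 2 * norm a * norm z ^ \<delta>"
    if z: "z \<noteq> 0" "norm z < \<rho>" for z
  proof -
    have "c * norm z < c * (norm a / (2 * c))"
      using z c unfolding \<rho>_def by (intro mult_strict_left_mono) auto
    then have "c * norm z \<le> norm a / 2" using c by simp
    have "norm (f z - a * z ^ \<delta>) \<le> c * norm z * norm z ^ \<delta>" using err z unfolding \<rho>_def by simp
    also have "\<dots> \<le> norm a / 2 * norm z ^ \<delta>"
      using \<open>c * norm z \<le> norm a / 2\<close> by (intro mult_right_mono) auto
    finally have e: "norm (f z - a * z ^ \<delta>) \<le> norm a / 2 * norm z ^ \<delta>" .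
    have "norm (a * z ^ \<delta>) \<le> norm (f z) + norm (f z - a * z ^ \<delta>)"
      using norm_triangle_ineq4[of "f z" "f z - a * z ^ \<delta>"] by simp
    moreover have "norm (f z) \<le> norm (a * z ^ \<delta>) + norm (f z - a * z ^ \<delta>)"
      using norm_triangle_ineq[of "a * z ^ \<delta>" "f z - a * z ^ \<delta>"] by simp
    ultimately show ?thesis using e by (simp add: norm_mult norm_power)
  qed
  have "(f \<longlongrightarrow> 0) (at 0)"
  proof (rule Lim_null_comparison)
    show "\<forall>\<^sub>F z in at 0. norm (f z) \<le> 2 * norm a * norm z ^ \<delta>"
      unfolding eventually_at using \<rho> bounds by (auto simp: dist_norm)
    have "isCont (\<lambda>z. 2 * norm a * norm z ^ \<delta>) 0" by (intro continuous_intros)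
    then show "((\<lambda>z. 2 * norm a * norm z ^ \<delta>) \<longlongrightarrow> 0) (at 0)"
      using \<delta> unfolding isCont_def by (simp add: power_0_left)
  qed
  then show f0: "f 0 = 0"
    using cont unfolding isCont_def by (rule tendsto_unique[OF at_neq_bot, rotated])
  have "norm a / 2 * norm z ^ \<delta> \<le> norm (f z) \<and> norm (f z) \<le> 2 * norm a * norm z ^ \<delta>"
    if "norm z < \<rho>" for z
  proof (cases "z = 0")
    case True
    then show ?thesis using f0 \<delta> by (simp add: power_0_left)
  qed (use bounds that in blast)
  with \<rho> show "\<exists>\<rho>>0. \<forall>z. norm z < \<rho> \<longrightarrow>
           norm a / 2 * norm z ^ \<delta> \<le> norm (f z) \<and> norm (f z) \<le> 2 * norm a * norm z ^ \<delta>"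
    by blast
qed

lemma norm_double_series_le:
  fixes b :: "nat \<Rightarrow> nat \<Rightarrow> complex" and z w t Q :: complex
  assumes hs: "((\<lambda>(i, j). b i j * z ^ i * w ^ j) has_sum Q) UNIV"
    and sm: "(\<lambda>(i, j). b i j * t ^ i * t ^ j) summable_on UNIV"
    and K: "K \<ge> 0"
    and monomial: "\<And>i j. b i j \<noteq> 0 \<Longrightarrow> norm z ^ i * norm w ^ j \<le> K * (norm t ^ i * norm t ^ j)"
  shows "norm Q \<le> K * (\<Sum>\<^sub>\<infinity>(i, j). norm (b i j) * norm t ^ i * norm t ^ j)"
proof -
  define f where "f = (\<lambda>(i, j). b i j * z ^ i * w ^ j)"
  define G where "G = (\<lambda>(i::nat, j::nat). norm (b i j) * norm t ^ i * norm t ^ j)"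
  have "(\<lambda>x. norm ((\<lambda>(i, j). b i j * t ^ i * t ^ j) x)) summable_on UNIV"
    using sm summable_on_iff_abs_summable_on_complex by blast
  moreover have "(\<lambda>x. norm ((\<lambda>(i, j). b i j * t ^ i * t ^ j) x)) = G"
    unfolding G_def by (auto simp: norm_mult norm_power)
  ultimately have KG: "(\<lambda>x. K * G x) summable_on UNIV" by (simp add: summable_on_cmult_right)
  have f_le: "norm (f x) \<le> K * G x" for x
  proof (cases x)
    case (Pair i j)
    show ?thesis
    proof (cases "b i j = 0")
      case True then show ?thesis using Pair K unfolding f_def G_def by simp
    next
      case False
      have "norm (f x) = norm (b i j) * (norm z ^ i * norm w ^ j)"
        using Pair unfolding f_def by (simp add: norm_mult norm_power)
      also have "\<dots> \<le> norm (b i j) * (K * (norm t ^ i * norm t ^ j))"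
        using monomial[OF False] by (intro mult_left_mono) auto
      finally show ?thesis using Pair unfolding G_def by (simp add: mult_ac)
    qed
  qed
  have f_abs: "(\<lambda>x. norm (f x)) summable_on UNIV"
    by (rule Infinite_Sum.abs_summable_on_comparison_test'[OF KG]) (use f_le in auto)
  have "norm Q \<le> (\<Sum>\<^sub>\<infinity>x. norm (f x))"
    using infsumI[OF hs] norm_infsum_bound[OF f_abs] unfolding f_def by simp
  also have "\<dots> \<le> (\<Sum>\<^sub>\<infinity>x. K * G x)" using f_abs KG f_le by (intro infsum_mono) auto
  also have "\<dots> = K * infsum G UNIV" by (rule infsum_cmult_right')
  finally show ?thesis unfolding G_def .
qed

lemma monomial_le_linear_plus_square:
  fixes x y \<tau> :: real
  assumes x: "0 \<le> x" "x \<le> \<tau>" and y: "0 \<le> y" "y \<le> \<tau>" and \<tau>: "0 < \<tau>" "\<tau> \<le> 1"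
    and ij: "(i, j) \<noteq> (0, 0)" "(i, j) \<noteq> (0, 1)"
  shows "x ^ i * y ^ j \<le> (x + y\<^sup>2) / \<tau>\<^sup>2 * (\<tau> ^ i * \<tau> ^ j)"
proof (cases i)
  case 0
  then obtain k where jk: "j = k + 2" using ij by (metis add_2_eq_Suc' not0_implies_Suc One_nat_def)
  have "x ^ i * y ^ j = y\<^sup>2 * y ^ k" unfolding 0 jk by (simp add: power_add power2_eq_square mult.commute)
  also have "\<dots> \<le> y\<^sup>2 * \<tau> ^ k" using y by (intro mult_left_mono power_mono) auto
  also have "\<dots> = y\<^sup>2 / \<tau>\<^sup>2 * (\<tau> ^ i * \<tau> ^ j)" unfolding 0 jk using \<tau> by (simp add: power_add power2_eq_square)
  also have "\<dots> \<le> (x + y\<^sup>2) / \<tau>\<^sup>2 * (\<tau> ^ i * \<tau> ^ j)"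
    using x \<tau> by (intro mult_right_mono divide_right_mono) auto
  finally show ?thesis .
next
  case (Suc k)
  have "x ^ i * y ^ j = x * (x ^ k * y ^ j)" unfolding Suc by simp
  also have "\<dots> \<le> x * (\<tau> ^ k * \<tau> ^ j)" using x y by (intro mult_left_mono mult_mono power_mono) auto
  also have "\<dots> = x / \<tau> * (\<tau> ^ i * \<tau> ^ j)" unfolding Suc using \<tau> by simp
  also have "\<dots> \<le> x / \<tau>\<^sup>2 * (\<tau> ^ i * \<tau> ^ j)"
  proof (intro mult_right_mono divide_left_mono)
    show "\<tau>\<^sup>2 \<le> \<tau>" using \<tau> by (simp add: power2_eq_square mult_le_cancel_left1)
  qed (use x \<tau> in auto)
  also have "\<dots> \<le> (x + y\<^sup>2) / \<tau>\<^sup>2 * (\<tau> ^ i * \<tau> ^ j)"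
    using y \<tau> by (intro mult_right_mono divide_right_mono) auto
  finally show ?thesis .
qed

lemma monomial_le_weighted:
  fixes x y \<sigma> \<tau> :: real
  assumes x: "0 \<le> x" and y: "0 < y" "y \<le> \<sigma>" and xy: "x powr l \<le> y" and l: "0 < l"
    and \<sigma>\<tau>: "\<sigma> \<le> \<tau>" "\<sigma> powr (1 / l) \<le> \<tau>"
    and deg: "e \<le> real i / l + real j"
  shows "x ^ i * y ^ j \<le> y powr e / \<sigma> powr e * (\<tau> ^ i * \<tau> ^ j)"
proof -
  let ?d = "real i / l + real j"
  have \<sigma>: "0 < \<sigma>" using y by simp
  have "x \<le> y powr (1 / l)"
  proof -
    have "x = (x powr l) powr (1 / l)" using x l by (simp add: powr_powr)
    also have "\<dots> \<le> y powr (1 / l)" using xy l by (intro powr_mono2) auto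
    finally show ?thesis .
  qed
  then have "x ^ i * y ^ j \<le> (y powr (1 / l)) ^ i * y powr real j"
    using x y by (intro mult_mono power_mono) (auto simp: powr_realpow)
  also have "\<dots> = y powr e * y powr (?d - e)"
    using y by (simp add: powr_realpow[symmetric] powr_powr powr_add[symmetric])
  also have "\<dots> \<le> y powr e * \<sigma> powr (?d - e)"
    using y deg by (intro mult_left_mono powr_mono2) auto
  also have "\<dots> = y powr e / \<sigma> powr e * ((\<sigma> powr (1 / l)) ^ i * \<sigma> powr real j)"
    using \<sigma> by (simp add: powr_diff powr_realpow[symmetric] powr_powr powr_add)
  also have "\<dots> \<le> y powr e / \<sigma> powr e * (\<tau> ^ i * \<tau> ^ j)"
    using \<sigma> \<sigma>\<tau> by (intro mult_left_mono mult_mono power_mono) (auto simp: powr_realpow power_mono)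
  finally show ?thesis .
qed

lemma faster_geometric_growth_contradiction:
  fixes W Y :: "nat \<Rightarrow> real"
  assumes d: "0 < d" and \<kappa>: "0 < \<kappa>"
    and ev: "\<forall>\<^sub>F n in sequentially. 0 < Y n \<and> 0 < W n \<and> (d + \<kappa>) * W n \<le> W (Suc n)
               \<and> Y (Suc n) \<le> d * Y n \<and> W n \<le> L * Y n"
  shows False
proof -
  obtain N where N: "\<And>n. N \<le> n \<Longrightarrow> 0 < Y n \<and> 0 < W n \<and> (d + \<kappa>) * W n \<le> W (Suc n)
               \<and> Y (Suc n) \<le> d * Y n \<and> W n \<le> L * Y n"
    using ev unfolding eventually_sequentially by blast
  define g where "g = (d + \<kappa>) / d"
  define R where "R n = W n / Y n" for n
  have g: "1 < g" unfolding g_def using d \<kappa> by simp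
  have step: "g * R n \<le> R (Suc n)" if n: "N \<le> n" for n
  proof -
    have "g * R n = ((d + \<kappa>) * W n) / (d * Y n)" unfolding g_def R_def by simp
    also have "\<dots> \<le> W (Suc n) / Y (Suc n)"
      using N[OF n] N[of "Suc n"] n by (intro frac_le) auto
    finally show ?thesis unfolding R_def .
  qed
  have growth: "g ^ k * R N \<le> R (N + k)" for k
  proof (induction k)
    case (Suc k)
    have "g ^ Suc k * R N \<le> g * R (N + k)" using Suc g by simp
    also have "\<dots> \<le> R (N + Suc k)" using step[of "N + k"] by simp
    finally show ?case .
  qed simp
  have RN: "0 < R N" unfolding R_def using N[of N] by simp
  obtain k where "L / R N < g ^ k" using real_arch_pow[OF g] by blast
  then have "L < g ^ k * R N" using RN by (simp add: divide_less_eq)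
  also have "\<dots> \<le> R (N + k)" by (rule growth)
  also have "\<dots> \<le> L" using N[of "N + k"] unfolding R_def by (simp add: divide_le_eq)
  finally show False by simp
qed

lemma log_growth_contradiction:
  fixes Z W :: "nat \<Rightarrow> real"
  assumes \<delta>: "1 < \<delta>" and e: "\<delta> < e" and ll': "l < l'"
    and Z: "filterlim Z at_top sequentially" and W: "filterlim W at_top sequentially"
    and Z_step: "\<forall>\<^sub>F n in sequentially. Z (Suc n) \<le> \<delta> * Z n + c1"
    and W_Z: "\<forall>\<^sub>F n in sequentially. W n \<le> c0 + l * Z n"
    and W_step: "\<forall>\<^sub>F n in sequentially. W n \<le> l' * Z n \<longrightarrow> e * W n - c2 \<le> W (Suc n)"
  shows False
proof -
  define c where "c = \<bar>c1\<bar> / (\<delta> - 1)"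
  have c: "0 \<le> c" unfolding c_def using \<delta> by simp
  have "(\<delta> - 1) * c = \<bar>c1\<bar>" unfolding c_def using \<delta> by simp
  then have c1: "c1 + c \<le> \<delta> * c" using abs_ge_self[of c1] by (simp add: left_diff_distrib)
  have "\<forall>\<^sub>F n in sequentially. 1 \<le> Z n \<and> \<bar>c0\<bar> / (l' - l) \<le> Z n"
    using Z unfolding filterlim_at_top by (auto intro: eventually_conj)
  moreover have "\<forall>\<^sub>F n in sequentially. 1 \<le> W n \<and> 2 * \<bar>c2\<bar> / (e - \<delta>) \<le> W n"
    using W unfolding filterlim_at_top by (auto intro: eventually_conj)
  ultimately have "\<forall>\<^sub>F n in sequentially. 0 < Z n + c \<and> 0 < W n
      \<and> (\<delta> + (e - \<delta>) / 2) * W n \<le> W (Suc n) \<and> Z (Suc n) + c \<le> \<delta> * (Z n + c)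
      \<and> W n \<le> (\<bar>c0\<bar> + \<bar>l\<bar>) * (Z n + c)"
    using Z_step W_Z W_step
  proof eventually_elim
    case (elim n)
    then have Z1: "1 \<le> Z n" and W1: "1 \<le> W n" by simp_all
    have "\<bar>c0\<bar> \<le> (l' - l) * Z n" using elim ll' by (simp add: divide_le_eq mult.commute)
    then have "c0 \<le> (l' - l) * Z n" using abs_ge_self[of c0] by linarith
    then have "W n \<le> l' * Z n" using elim by (simp add: algebra_simps)
    then have "e * W n - c2 \<le> W (Suc n)" using elim by simp
    moreover have "\<bar>c2\<bar> \<le> (e - \<delta>) / 2 * W n" using elim e by (simp add: field_simps)
    then have "c2 \<le> (e - \<delta>) / 2 * W n" using abs_ge_self[of c2] by linarith
    moreover have "(\<delta> + (e - \<delta>) / 2) * W n = e * W n - (e - \<delta>) / 2 * W n"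
      by (simp add: algebra_simps)
    ultimately have "(\<delta> + (e - \<delta>) / 2) * W n \<le> W (Suc n)" by linarith
    moreover have "Z (Suc n) + c \<le> \<delta> * (Z n + c)" using elim c1 by (simp add: algebra_simps)
    moreover have "W n \<le> (\<bar>c0\<bar> + \<bar>l\<bar>) * (Z n + c)"
    proof -
      have "\<bar>c0\<bar> * 1 \<le> \<bar>c0\<bar> * (Z n + c)" using Z1 c by (intro mult_left_mono) auto
      moreover have "l * Z n \<le> \<bar>l\<bar> * Z n" using Z1 by (intro mult_right_mono) auto
      moreover have "\<bar>l\<bar> * Z n \<le> \<bar>l\<bar> * (Z n + c)" using c by (intro mult_left_mono) auto
      ultimately have "c0 + l * Z n \<le> \<bar>c0\<bar> * (Z n + c) + \<bar>l\<bar> * (Z n + c)"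
        using abs_ge_self[of c0] by linarith
      then show ?thesis using elim by (simp add: algebra_simps)
    qed
    ultimately show ?case using Z1 W1 c by simp
  qed
  then show False
    by (rule faster_geometric_growth_contradiction[rotated 2]) (use \<delta> e in auto)
qed

lemma powr_le_iff_neg_ln:
  fixes k u v s :: real
  assumes "0 < k" "0 < u" "0 < v"
  shows "k * u powr s \<le> v \<longleftrightarrow> - ln v \<le> s * (- ln u) - ln k"
    and "v \<le> k * u powr s \<longleftrightarrow> s * (- ln u) - ln k \<le> - ln v"
  using assms by (simp_all add: ln_le_cancel_iff[symmetric] ln_mult ln_powr del: ln_le_cancel_iff, linarith+)

section \<open>Dynamics of the skew product\<close>

lemma skew_iter_Suc:
  "(skew p q ^^ Suc n) x
     = (p (fst ((skew p q ^^ n) x)), q (fst ((skew p q ^^ n) x)) (snd ((skew p q ^^ n) x)))"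
  by (simp add: skew_def case_prod_unfold)

lemma fst_skew_iter: "fst ((skew p q ^^ n) x) = (p ^^ n) (fst x)"
  by (induction n) (simp_all add: skew_iter_Suc del: funpow.simps, simp)

lemma fst_skew_iter_zero_stays:
  assumes p0: "p 0 = 0" and zero: "fst ((skew p q ^^ m) x) = 0" and mk: "m \<le> k"
  shows "fst ((skew p q ^^ k) x) = 0"
proof -
  have "(p ^^ j) 0 = 0" for j using p0 by (induction j) simp_all
  moreover have "(p ^^ k) (fst x) = (p ^^ (k - m)) ((p ^^ m) (fst x))"
    using mk by (metis funpow_add comp_apply le_add_diff_inverse2)
  ultimately show ?thesis using zero unfolding fst_skew_iter by simp
qed

lemma preimage_iter_basin_subset: "preimage_iter F Dom n (basin F Dom c) \<subseteq> basin F Dom c"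
proof
  fix x assume "x \<in> preimage_iter F Dom n (basin F Dom c)"
  then have pre: "\<And>k. k < n \<Longrightarrow> (F ^^ k) x \<in> Dom" and y: "(F ^^ n) x \<in> basin F Dom c"
    unfolding preimage_iter_def by auto
  have shift: "(F ^^ (m + n)) x = (F ^^ m) ((F ^^ n) x)" for m by (simp add: funpow_add)
  have "(F ^^ m) x \<in> Dom" for m
  proof (cases "m < n")
    case False
    then have "(F ^^ m) x = (F ^^ (m - n)) ((F ^^ n) x)" using shift[of "m - n"] by simp
    then show ?thesis using y unfolding basin_def by simp
  qed (rule pre)
  moreover have "(\<lambda>m. (F ^^ (m + n)) x) \<longlonglongrightarrow> c" using y unfolding shift basin_def by simp
  then have "(\<lambda>m. (F ^^ m) x) \<longlonglongrightarrow> c" by (rule LIMSEQ_offset)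
  ultimately show "x \<in> basin F Dom c" unfolding basin_def by simp
qed

lemma backward_orbit_eq_basin_diff:
  assumes p0: "p 0 = 0"
    and U_basin: "\<And>x. x \<in> U \<Longrightarrow> x \<in> basin (skew p q) Dom (0, 0) \<and> (\<forall>n. fst ((skew p q ^^ n) x) \<noteq> 0)"
    and U_entered: "\<And>x. x \<in> basin (skew p q) Dom (0, 0) \<Longrightarrow> \<forall>n. fst ((skew p q ^^ n) x) \<noteq> 0
               \<Longrightarrow> \<exists>n. (skew p q ^^ n) x \<in> U"
  shows "backward_orbit (skew p q) Dom U
       = basin (skew p q) Dom (0, 0) - backward_orbit (skew p q) Dom {x \<in> Dom. fst x = 0}"
    (is "?A = ?B - ?E")
proof -
  let ?F = "skew p q"
  have E_iff: "x \<in> ?E \<longleftrightarrow> (\<exists>n. fst ((?F ^^ n) x) = 0)" if "x \<in> ?B" for x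
    using that unfolding backward_orbit_def preimage_iter_def basin_def by auto
  show ?thesis
  proof (intro equalityI subsetI)
    fix x assume "x \<in> ?A"
    then obtain n where x: "x \<in> preimage_iter ?F Dom n U" unfolding backward_orbit_def by blast
    then have y: "(?F ^^ n) x \<in> U" unfolding preimage_iter_def by simp
    have "x \<in> preimage_iter ?F Dom n ?B" using x U_basin[OF y] unfolding preimage_iter_def by simp
    then have xB: "x \<in> ?B" using preimage_iter_basin_subset by blast
    have "fst ((?F ^^ m) x) \<noteq> 0" for m
    proof
      assume "fst ((?F ^^ m) x) = 0"
      then have "fst ((?F ^^ (max m n - n + n)) x) = 0"
        using fst_skew_iter_zero_stays[where p = p and q = q and m = m and x = x, OF p0] by (metis le_add_diff_inverse2 max.cobounded1 max.cobounded2)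
      moreover have "(?F ^^ (max m n - n + n)) x = (?F ^^ (max m n - n)) ((?F ^^ n) x)"
        by (simp only: funpow_add comp_apply)
      ultimately show False using U_basin[OF y] by simp
    qed
    with xB E_iff show "x \<in> ?B - ?E" by blast
  next
    fix x assume "x \<in> ?B - ?E"
    then have xB: "x \<in> ?B" and nz: "\<forall>n. fst ((?F ^^ n) x) \<noteq> 0" using E_iff by blast+
    obtain n where "(?F ^^ n) x \<in> U" using U_entered[OF xB nz] by blast
    then have "x \<in> preimage_iter ?F Dom n U" using xB unfolding preimage_iter_def basin_def by simp
    then show "x \<in> ?A" unfolding backward_orbit_def by blast
  qed
qed

lemma skew_orbit_contracts:
  fixes p :: "complex \<Rightarrow> complex" and q :: "complex \<Rightarrow> complex \<Rightarrow> complex"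
  assumes C: "1 \<le> C" and \<eta>\<theta>: "2 * C * \<eta> \<le> \<theta>"
    and step: "\<And>z w. norm z \<le> \<eta> \<Longrightarrow> norm w \<le> \<theta>
                 \<Longrightarrow> norm (p z) \<le> norm z / 4 \<and> norm (q z w) \<le> C * norm z + norm w / 2"
    and x: "norm (fst x) \<le> \<eta>" "norm (snd x) \<le> \<theta>"
  shows "norm (fst ((skew p q ^^ n) x)) \<le> \<eta> \<and> norm (snd ((skew p q ^^ n) x)) \<le> \<theta>"
    and "(\<lambda>n. (skew p q ^^ n) x) \<longlonglongrightarrow> 0"
proof -
  \<comment> \<open>the weight 4C lets the contraction of z absorb the term C |z| in the bound for q\<close>
  define M where "M = (\<lambda>y::complex \<times> complex. norm (snd y) + 4 * C * norm (fst y))"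
  have inv: "norm (fst ((skew p q ^^ n) x)) \<le> \<eta> \<and> norm (snd ((skew p q ^^ n) x)) \<le> \<theta>
      \<and> M ((skew p q ^^ n) x) \<le> M x / 2 ^ n" for n
  proof (induction n)
    case (Suc n)
    define z where "z = fst ((skew p q ^^ n) x)"
    define w where "w = snd ((skew p q ^^ n) x)"
    have zw: "norm z \<le> \<eta>" "norm w \<le> \<theta>" "norm w + 4 * C * norm z \<le> M x / 2 ^ n"
      using Suc unfolding z_def w_def M_def by auto
    have pz: "norm (p z) \<le> norm z / 4" and qzw: "norm (q z w) \<le> C * norm z + norm w / 2"
      using step[OF zw(1,2)] by auto
    have "C * norm z \<le> C * \<eta>" using zw C by (intro mult_left_mono) auto
    then have "norm (q z w) \<le> \<theta>" using qzw zw \<eta>\<theta> by linarith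
    moreover have "norm (p z) \<le> \<eta>" using pz zw norm_ge_zero[of "p z"] by linarith
    moreover have "4 * C * norm (p z) \<le> C * norm z" using pz C by (simp add: mult_left_mono)
    then have "norm (q z w) + 4 * C * norm (p z) \<le> M x / 2 ^ Suc n" using qzw zw by simp
    ultimately show ?case
      by (simp add: skew_iter_Suc M_def z_def[symmetric] w_def[symmetric] del: funpow.simps)
  qed (use x M_def in simp)
  then show "norm (fst ((skew p q ^^ n) x)) \<le> \<eta> \<and> norm (snd ((skew p q ^^ n) x)) \<le> \<theta>" by blast
  show "(\<lambda>n. (skew p q ^^ n) x) \<longlonglongrightarrow> 0"
  proof (rule tendsto_norm_zero_cancel, rule Lim_null_comparison)
    show "\<forall>\<^sub>F n in sequentially. norm (norm ((skew p q ^^ n) x)) \<le> M x / 2 ^ n"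
    proof (rule always_eventually, rule allI)
      fix n
      have "norm ((skew p q ^^ n) x) \<le> M ((skew p q ^^ n) x)"
        using norm_Pair_le[of "fst ((skew p q ^^ n) x)" "snd ((skew p q ^^ n) x)"] C
        unfolding M_def by (smt (verit) mult_le_cancel_right1 norm_ge_zero prod.collapse)
      then show "norm (norm ((skew p q ^^ n) x)) \<le> M x / 2 ^ n" using inv[of n] by simp
    qed
    show "(\<lambda>n. M x / 2 ^ n) \<longlonglongrightarrow> 0"
      by (intro tendsto_divide_0[OF tendsto_const]) (simp add: filterlim_realpow_sequentially_gt1)
  qed
qed

lemma neg_ln_norm_tendsto_at_top:
  fixes u :: "nat \<Rightarrow> 'a::real_normed_vector"
  assumes "u \<longlonglongrightarrow> 0" and "\<forall>\<^sub>F n in sequentially. u n \<noteq> 0"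
  shows "filterlim (\<lambda>n. - ln (norm (u n))) at_top sequentially"
proof -
  have "filterlim (\<lambda>n. norm (u n)) (at_right 0) sequentially"
    using assms by (intro tendsto_imp_filterlim_at_right) (auto intro: tendsto_norm_zero elim: eventually_mono)
  then have "filterlim (\<lambda>n. ln (norm (u n))) at_bot sequentially"
    by (rule filterlim_compose[OF ln_at_0])
  then show ?thesis by (simp add: filterlim_uminus_at_bot)
qed

locale skew_near_origin =
  fixes p :: "complex \<Rightarrow> complex" and q :: "complex \<Rightarrow> complex \<Rightarrow> complex"
    and b :: "nat \<Rightarrow> nat \<Rightarrow> complex" and a :: complex and \<delta> :: nat and \<rho> \<tau> :: real
  assumes p0: "p 0 = 0" and \<rho>: "0 < \<rho>"
    and p_bounds: "\<And>z. norm z < \<rho> \<Longrightarrow>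
                     norm a / 2 * norm z ^ \<delta> \<le> norm (p z) \<and> norm (p z) \<le> 2 * norm a * norm z ^ \<delta>"
    and a_nz: "a \<noteq> 0" and delta: "2 \<le> \<delta>"
    and \<tau>: "0 < \<tau>" "\<tau> < 1"
    and q_series: "\<And>z w. norm z \<le> \<tau> \<Longrightarrow> ((\<lambda>(i, j). b i j * z ^ i * w ^ j) has_sum q z w) UNIV"
    and b00: "b 0 0 = 0" and b01: "b 0 1 = 0"
begin

lemma norm_q_le_majorant:
  assumes z: "norm z \<le> \<tau>" and K: "0 \<le> K"
    and monomial: "\<And>i j. b i j \<noteq> 0 \<Longrightarrow> norm z ^ i * norm w ^ j \<le> K * (\<tau> ^ i * \<tau> ^ j)"
  shows "norm (q z w) \<le> K * (\<Sum>\<^sub>\<infinity>(i, j). norm (b i j) * \<tau> ^ i * \<tau> ^ j)"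
proof -
  have t: "norm (complex_of_real \<tau>) = \<tau>" using \<tau> by simp
  have "(\<lambda>(i, j). b i j * of_real \<tau> ^ i * of_real \<tau> ^ j) summable_on UNIV"
    using has_sum_imp_summable[OF q_series[of "of_real \<tau>" "of_real \<tau>"]] t by simp
  from norm_double_series_le[OF q_series[OF z] this K] monomial
  show ?thesis unfolding t by blast
qed

lemma q_bound_near_origin:
  obtains C where "1 \<le> C"
    "\<And>z w. norm z \<le> \<tau> \<Longrightarrow> norm w \<le> \<tau> \<Longrightarrow> norm (q z w) \<le> C * (norm z + (norm w)\<^sup>2)"
proof
  define \<Sigma> where "\<Sigma> = (\<Sum>\<^sub>\<infinity>(i, j). norm (b i j) * \<tau> ^ i * \<tau> ^ j)"
  show "1 \<le> max 1 (\<Sigma> / \<tau>\<^sup>2)" by simp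
  fix z w :: complex assume z: "norm z \<le> \<tau>" and w: "norm w \<le> \<tau>"
  have ij: "(i, j) \<noteq> (0, 0)" "(i, j) \<noteq> (0, 1)" if "b i j \<noteq> 0" for i j
    using that b00 b01 by (intro notI, simp)+
  have "norm (q z w) \<le> (norm z + (norm w)\<^sup>2) / \<tau>\<^sup>2 * \<Sigma>"
    unfolding \<Sigma>_def by (intro norm_q_le_majorant monomial_le_linear_plus_square) (use z w \<tau> ij in auto)
  also have "\<dots> = \<Sigma> / \<tau>\<^sup>2 * (norm z + (norm w)\<^sup>2)" by simp
  also have "\<dots> \<le> max 1 (\<Sigma> / \<tau>\<^sup>2) * (norm z + (norm w)\<^sup>2)" by (intro mult_right_mono) auto
  finally show "norm (q z w) \<le> max 1 (\<Sigma> / \<tau>\<^sup>2) * (norm z + (norm w)\<^sup>2)" .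
qed

lemma q_bound_weighted:
  assumes order: "weighted_order_ge b l e" and l: "0 < l"
  obtains \<sigma> C where "0 < \<sigma>" "0 < C"
    "\<And>z w. norm z \<le> \<tau> \<Longrightarrow> 0 < norm w \<Longrightarrow> norm w \<le> \<sigma> \<Longrightarrow> norm z powr l \<le> norm w
       \<Longrightarrow> norm (q z w) \<le> C * norm w powr e"
proof
  define \<sigma> where "\<sigma> = min \<tau> (\<tau> powr l)"
  define \<Sigma> where "\<Sigma> = (\<Sum>\<^sub>\<infinity>(i, j). norm (b i j) * \<tau> ^ i * \<tau> ^ j)"
  show \<sigma>: "0 < \<sigma>" unfolding \<sigma>_def using \<tau> by simp
  show "0 < max 1 (\<Sigma> / \<sigma> powr e)" by simp
  have \<sigma>_root: "\<sigma> powr (1 / l) \<le> \<tau>"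
  proof -
    have "\<sigma> powr (1 / l) \<le> (\<tau> powr l) powr (1 / l)"
      using \<sigma> l unfolding \<sigma>_def by (intro powr_mono2) auto
    then show ?thesis using \<tau> l by (simp add: powr_powr)
  qed
  fix z w :: complex assume z: "norm z \<le> \<tau>" and w: "0 < norm w" "norm w \<le> \<sigma>" and zw: "norm z powr l \<le> norm w"
  have "norm (q z w) \<le> norm w powr e / \<sigma> powr e * \<Sigma>"
    unfolding \<Sigma>_def using z w zw l \<sigma>_root order
    by (intro norm_q_le_majorant monomial_le_weighted)
      (auto simp: \<sigma>_def weighted_order_ge_def)
  also have "\<dots> = \<Sigma> / \<sigma> powr e * norm w powr e" by simp
  also have "\<dots> \<le> max 1 (\<Sigma> / \<sigma> powr e) * norm w powr e" by (intro mult_right_mono) auto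
  finally show "norm (q z w) \<le> max 1 (\<Sigma> / \<sigma> powr e) * norm w powr e" .
qed

lemma contraction_constants:
  obtains C \<eta> \<theta> where "1 \<le> C" "0 < \<eta>" "\<eta> < \<rho>" "\<eta> \<le> \<tau>" "2 * C * \<eta> \<le> \<theta>"
    "\<And>z w. norm z \<le> \<eta> \<Longrightarrow> norm w \<le> \<theta>
       \<Longrightarrow> norm (p z) \<le> norm z / 4 \<and> norm (q z w) \<le> C * norm z + norm w / 2"
proof -
  obtain C where C: "1 \<le> C"
    and qC: "\<And>z w. norm z \<le> \<tau> \<Longrightarrow> norm w \<le> \<tau> \<Longrightarrow> norm (q z w) \<le> C * (norm z + (norm w)\<^sup>2)"
    using q_bound_near_origin by blast
  define \<theta> where "\<theta> = min \<tau> (1 / (2 * C))"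
  define \<eta> where "\<eta> = min (\<theta> / (2 * C)) (min (\<rho> / 2) (1 / (8 * norm a)))"
  have \<theta>: "0 < \<theta>" "\<theta> \<le> \<tau>" "C * \<theta> \<le> 1 / 2"
    unfolding \<theta>_def using \<tau> C by (auto simp: min_def field_simps)
  have \<eta>_le: "\<eta> \<le> \<theta> / (2 * C)" "\<eta> \<le> \<rho> / 2" "\<eta> \<le> 1 / (8 * norm a)"
    unfolding \<eta>_def by auto
  have "2 * C * \<eta> \<le> \<theta>" using \<eta>_le(1) C by (simp add: field_simps)
  moreover have "\<theta> / (2 * C) \<le> \<theta>" using \<theta> C by (simp add: field_simps)
  ultimately have \<eta>: "0 < \<eta>" "\<eta> < \<rho>" "\<eta> \<le> \<theta>" "2 * C * \<eta> \<le> \<theta>" "\<eta> \<le> 1 / (8 * norm a)"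
    using \<eta>_le \<theta> \<rho> C a_nz unfolding \<eta>_def by auto
  have "norm (p z) \<le> norm z / 4 \<and> norm (q z w) \<le> C * norm z + norm w / 2"
    if z: "norm z \<le> \<eta>" and w: "norm w \<le> \<theta>" for z w
  proof
    have z1: "norm z \<le> 1" using z \<eta> \<theta> \<tau> by linarith
    have "norm z ^ \<delta> \<le> norm z * norm z"
      using power_decreasing[OF delta _ z1] by (simp add: power2_eq_square)
    also have "\<dots> \<le> norm z * (1 / (8 * norm a))" using z \<eta> by (intro mult_left_mono) auto
    finally have "2 * norm a * norm z ^ \<delta> \<le> norm z / 4" using a_nz by (simp add: field_simps)
    then show "norm (p z) \<le> norm z / 4" using p_bounds[of z] z \<eta> by linarith
    have "C * norm w \<le> 1 / 2" using w \<theta> C by (smt (verit) mult_left_mono)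
    then have "C * norm w * norm w \<le> 1 / 2 * norm w" by (intro mult_right_mono) auto
    then have "C * (norm w)\<^sup>2 \<le> norm w / 2" by (simp add: power2_eq_square mult.assoc)
    moreover have "norm (q z w) \<le> C * (norm z + (norm w)\<^sup>2)" using qC z w \<eta> \<theta> by simp
    ultimately show "norm (q z w) \<le> C * norm z + norm w / 2" by (simp add: algebra_simps)
  qed
  with C \<eta> \<theta> that show ?thesis by (meson order.trans)
qed

lemma Uset_subset_basin:
  assumes D: "cball 0 \<tau> \<subseteq> D"
  obtains r0 where "0 < r0"
    "\<And>r l x. 0 < r \<Longrightarrow> r < r0 \<Longrightarrow> 0 < l \<Longrightarrow> x \<in> Uset r l
       \<Longrightarrow> x \<in> basin (skew p q) (D \<times> UNIV) (0, 0) \<and> (\<forall>n. fst ((skew p q ^^ n) x) \<noteq> 0)"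
proof -
  obtain C \<eta> \<theta> where C: "1 \<le> C" and \<eta>: "0 < \<eta>" "\<eta> < \<rho>" "\<eta> \<le> \<tau>" and \<eta>\<theta>: "2 * C * \<eta> \<le> \<theta>"
    and step: "\<And>z w. norm z \<le> \<eta> \<Longrightarrow> norm w \<le> \<theta>
                 \<Longrightarrow> norm (p z) \<le> norm z / 4 \<and> norm (q z w) \<le> C * norm z + norm w / 2"
    using contraction_constants by blast
  have "x \<in> basin (skew p q) (D \<times> UNIV) (0, 0) \<and> (\<forall>n. fst ((skew p q ^^ n) x) \<noteq> 0)"
    if r: "0 < r" "r < \<eta>" and l: "0 < l" and xU: "x \<in> Uset r l" for r l x
  proof -
    obtain z w where x: "x = (z, w)" by fastforce
    have zr: "norm z < r" and wr: "norm w < r * norm z powr l" using xU unfolding Uset_def x by auto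
    then have z0: "z \<noteq> 0" by auto
    have "norm z powr l \<le> 1" using zr r \<eta> \<tau> l by (intro powr_le1) auto
    then have "r * norm z powr l \<le> r" using r by (simp add: mult_left_le)
    moreover have "1 * \<eta> \<le> (2 * C) * \<eta>" using C \<eta> by (intro mult_right_mono) auto
    ultimately have "norm w \<le> \<theta>" using wr r \<eta>\<theta> by linarith
    then have orbit: "norm (fst ((skew p q ^^ n) x)) \<le> \<eta>" "(\<lambda>n. (skew p q ^^ n) x) \<longlonglongrightarrow> 0" for n
      using skew_orbit_contracts[OF C \<eta>\<theta> step] zr r x by auto
    have "(skew p q ^^ n) x \<in> D \<times> UNIV" for n
      using orbit(1)[of n] \<eta> D by (cases "(skew p q ^^ n) x") auto
    moreover have "fst ((skew p q ^^ n) x) \<noteq> 0" for n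
    proof (induction n)
      case (Suc n)
      have "norm (fst ((skew p q ^^ n) x)) < \<rho>" using orbit(1)[of n] \<eta> by simp
      then have "norm a / 2 * norm (fst ((skew p q ^^ n) x)) ^ \<delta> \<le> norm (fst ((skew p q ^^ Suc n) x))"
        using p_bounds by (simp add: skew_iter_Suc del: funpow.simps)
      moreover have "0 < norm a / 2 * norm (fst ((skew p q ^^ n) x)) ^ \<delta>" using Suc a_nz by simp
      ultimately show ?case by auto
    qed (use x z0 in simp)
    ultimately show ?thesis using orbit(2) unfolding basin_def by (simp add: zero_prod_def)
  qed
  with \<eta> that show ?thesis by blast
qed

lemma neg_ln_norm_p_le:
  assumes "z \<noteq> 0" "norm z < \<rho>"
  shows "- ln (norm (p z)) \<le> real \<delta> * - ln (norm z) + - ln (norm a / 2)"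
proof -
  have lower: "norm a / 2 * norm z powr real \<delta> \<le> norm (p z)"
    using p_bounds[OF assms(2)] assms(1) by (simp add: powr_realpow)
  moreover have "0 < norm a / 2 * norm z powr real \<delta>" using assms(1) a_nz by simp
  ultimately have "0 < norm (p z)" by linarith
  then show ?thesis
    using powr_le_iff_neg_ln(1)[of "norm a / 2" "norm z" "norm (p z)" "real \<delta>"] lower assms(1) a_nz
    by simp
qed

lemma q_bound_weighted_log:
  assumes order: "weighted_order_ge b l e" and l: "0 < l"
  obtains \<sigma> c where "0 < \<sigma>"
    "\<And>z w. norm z \<le> \<tau> \<Longrightarrow> z \<noteq> 0 \<Longrightarrow> 0 < norm w \<Longrightarrow> norm w \<le> \<sigma> \<Longrightarrow> q z w \<noteq> 0
       \<Longrightarrow> - ln (norm w) \<le> l * - ln (norm z) \<Longrightarrow> e * - ln (norm w) - c \<le> - ln (norm (q z w))"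
proof -
  obtain \<sigma> C where \<sigma>: "0 < \<sigma>" and C: "0 < C"
    and qC: "\<And>z w. norm z \<le> \<tau> \<Longrightarrow> 0 < norm w \<Longrightarrow> norm w \<le> \<sigma> \<Longrightarrow> norm z powr l \<le> norm w
               \<Longrightarrow> norm (q z w) \<le> C * norm w powr e"
    using q_bound_weighted[OF order l] by auto
  show ?thesis
  proof (rule that[OF \<sigma>])
    fix z w assume z: "norm z \<le> \<tau>" "z \<noteq> 0" and w: "0 < norm w" "norm w \<le> \<sigma>" and "q z w \<noteq> 0"
      and "- ln (norm w) \<le> l * - ln (norm z)"
    then have "1 * norm z powr l \<le> norm w" using powr_le_iff_neg_ln(1)[of 1 "norm z" "norm w" l] by simp
    then have "norm (q z w) \<le> C * norm w powr e" using qC z w by simp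
    then show "e * - ln (norm w) - ln C \<le> - ln (norm (q z w))"
      using powr_le_iff_neg_ln(2)[of C "norm w" "norm (q z w)" e] C w \<open>q z w \<noteq> 0\<close> by simp
  qed
qed

lemma orbit_enters_Uset:
  assumes order: "weighted_order_ge b l' e" and e: "real \<delta> < e" and l: "0 < l" "l < l'" and r: "0 < r"
    and x: "x \<in> basin (skew p q) Dom (0, 0)" and nz: "\<forall>n. fst ((skew p q ^^ n) x) \<noteq> 0"
  shows "\<exists>n. (skew p q ^^ n) x \<in> Uset r l"
proof (rule ccontr)
  assume outside: "\<not> ?thesis"
  define z where "z n = fst ((skew p q ^^ n) x)" for n
  define w where "w n = snd ((skew p q ^^ n) x)" for n
  have zS: "z (Suc n) = p (z n)" and wS: "w (Suc n) = q (z n) (w n)" for n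
    unfolding z_def w_def by (simp_all add: skew_iter_Suc del: funpow.simps)
  have z_nz: "z n \<noteq> 0" for n using nz unfolding z_def by simp
  have "(\<lambda>n. (skew p q ^^ n) x) \<longlonglongrightarrow> (0, 0)" using x unfolding basin_def by simp
  then have z0: "z \<longlonglongrightarrow> 0" and w0: "w \<longlonglongrightarrow> 0"
    unfolding z_def w_def by (auto dest: tendsto_fst tendsto_snd)
  obtain \<sigma> c where \<sigma>: "0 < \<sigma>"
    and q_log: "\<And>z w. norm z \<le> \<tau> \<Longrightarrow> z \<noteq> 0 \<Longrightarrow> 0 < norm w \<Longrightarrow> norm w \<le> \<sigma> \<Longrightarrow> q z w \<noteq> 0
       \<Longrightarrow> - ln (norm w) \<le> l' * - ln (norm z) \<Longrightarrow> e * - ln (norm w) - c \<le> - ln (norm (q z w))"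
    using q_bound_weighted_log[OF order] l by auto
  have above: "r * norm (z n) powr l \<le> norm (w n)" if "norm (z n) < r" for n
    using outside that unfolding Uset_def z_def w_def by (metis (mono_tags, lifting) case_prod_conv mem_Collect_eq not_le prod.collapse)
  have "\<forall>\<^sub>F n in sequentially. norm (z n) < min r (min \<rho> \<tau>) \<and> norm (w n) < \<sigma>"
    using tendsto_norm_zero[OF z0] tendsto_norm_zero[OF w0] r \<rho> \<tau> \<sigma>
    by (intro eventually_conj order_tendstoD(2)) auto
  then have small: "\<forall>\<^sub>F n in sequentially. norm (z n) < \<rho> \<and> norm (z n) \<le> \<tau>
      \<and> 0 < norm (w n) \<and> norm (w n) < \<sigma> \<and> r * norm (z n) powr l \<le> norm (w n)"
  proof (rule eventually_mono)
    fix n assume "norm (z n) < min r (min \<rho> \<tau>) \<and> norm (w n) < \<sigma>"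
    moreover from this have "r * norm (z n) powr l \<le> norm (w n)" by (intro above) simp
    moreover have "0 < r * norm (z n) powr l" using r z_nz by simp
    ultimately show "norm (z n) < \<rho> \<and> norm (z n) \<le> \<tau>
      \<and> 0 < norm (w n) \<and> norm (w n) < \<sigma> \<and> r * norm (z n) powr l \<le> norm (w n)" by auto
  qed
  then have w_nz: "\<forall>\<^sub>F n in sequentially. w (Suc n) \<noteq> 0"
    by (subst eventually_sequentially_Suc) (auto elim: eventually_mono)
  define Z where "Z n = - ln (norm (z n))" for n
  define W where "W n = - ln (norm (w n))" for n
  show False
  proof (rule log_growth_contradiction[of "real \<delta>" e l l' Z W])
    show "filterlim Z at_top sequentially"
      unfolding Z_def by (rule neg_ln_norm_tendsto_at_top[OF z0]) (use z_nz in auto)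
    show "filterlim W at_top sequentially"
      unfolding W_def by (rule neg_ln_norm_tendsto_at_top[OF w0]) (use small in \<open>auto elim: eventually_mono\<close>)
    show "\<forall>\<^sub>F n in sequentially. Z (Suc n) \<le> real \<delta> * Z n + - ln (norm a / 2)"
      using small by eventually_elim (use z_nz neg_ln_norm_p_le in \<open>simp add: Z_def zS\<close>)
    show "\<forall>\<^sub>F n in sequentially. W n \<le> - ln r + l * Z n"
      using small
    proof eventually_elim
      case (elim n)
      then have "r * norm (z n) powr l \<le> norm (w n)" "0 < norm (w n)" by auto
      then show ?case
        using powr_le_iff_neg_ln(1)[of r "norm (z n)" "norm (w n)" l] z_nz r unfolding Z_def W_def by simp
    qed
    show "\<forall>\<^sub>F n in sequentially. W n \<le> l' * Z n \<longrightarrow> e * W n - c \<le> W (Suc n)"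
      using small w_nz by eventually_elim (use z_nz q_log in \<open>simp add: Z_def W_def wS\<close>)
  qed (use delta e l in auto)
qed

lemma backward_orbit_Uset_eq:
  assumes D: "cball 0 \<tau> \<subseteq> D"
  obtains r0 where "0 < r0"
    "\<And>r l. 0 < r \<Longrightarrow> r < r0 \<Longrightarrow> 0 < l \<Longrightarrow> \<exists>l'>l. \<exists>e>real \<delta>. weighted_order_ge b l' e
       \<Longrightarrow> backward_orbit (skew p q) (D \<times> UNIV) (Uset r l)
             = basin (skew p q) (D \<times> UNIV) (0, 0)
               - backward_orbit (skew p q) (D \<times> UNIV) {x \<in> D \<times> UNIV. fst x = 0}"
proof -
  obtain r0 where r0: "0 < r0" and U: "\<And>r l x. 0 < r \<Longrightarrow> r < r0 \<Longrightarrow> 0 < l \<Longrightarrow> x \<in> Uset r l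
       \<Longrightarrow> x \<in> basin (skew p q) (D \<times> UNIV) (0, 0) \<and> (\<forall>n. fst ((skew p q ^^ n) x) \<noteq> 0)"
    using Uset_subset_basin[OF D] by blast
  show ?thesis
  proof (rule that[OF r0])
    fix r l assume r: "0 < r" "r < r0" and l: "0 < l" and "\<exists>l'>l. \<exists>e>real \<delta>. weighted_order_ge b l' e"
    then obtain l' e where "l < l'" "real \<delta> < e" "weighted_order_ge b l' e" by blast
    then show "backward_orbit (skew p q) (D \<times> UNIV) (Uset r l)
             = basin (skew p q) (D \<times> UNIV) (0, 0)
               - backward_orbit (skew p q) (D \<times> UNIV) {x \<in> D \<times> UNIV. fst x = 0}"
      using U[OF r l] orbit_enters_Uset l r by (intro backward_orbit_eq_basin_diff[where p = p and q = q, OF p0]) blast+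
  qed
qed

end

theorem theorem2p3:
  fixes p :: "complex \<Rightarrow> complex" and q :: "complex \<Rightarrow> complex \<Rightarrow> complex"
    and b :: "nat \<Rightarrow> nat \<Rightarrow> complex" and D :: "complex set"
    and a :: complex and \<delta> :: nat
    and n1 m1 ns1 ms1 ns ms :: real
  assumes dom: "D = UNIV \<or> (\<exists>R>0. D = ball 0 R \<and> compact (closure (basin p D 0))
                         \<and> closure (basin p D 0) \<subseteq> ball 0 R)"
    and p_holo: "p holomorphic_on D"
    and a_nz: "a \<noteq> 0" and delta: "\<delta> \<ge> 2"
    and p_expand: "(\<lambda>z. p z - a * z ^ \<delta>) \<in> O[at 0](\<lambda>z. z ^ (\<delta> + 1))"
    and q_series: "\<forall>z\<in>D. \<forall>w. ((\<lambda>(i, j). b i j * z ^ i * w ^ j) has_sum q z w) UNIV"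
    and b00: "b 0 0 = 0" and b01: "b 0 1 = 0"
    and v1: "(n1, m1) \<in> newton_vertices b"
    and vs1: "(ns1, ms1) \<in> newton_vertices b"
    and vs: "(ns, ms) \<in> newton_vertices b"
    and two: "ns1 < ns"
    and first: "\<forall>v\<in>newton_vertices b. n1 \<le> fst v"
    and last: "\<forall>v\<in>newton_vertices b. fst v \<le> ns"
    and second_last: "\<forall>v\<in>newton_vertices b - {(ns, ms)}. fst v \<le> ns1"
    and case2: "real \<delta> \<le> ms1 + ns1 * (ms1 - ms) / (ns - ns1)"
  shows "\<exists>r0>0. \<forall>r. 0 < r \<and> r < r0 \<longrightarrow>
     (real \<delta> \<le> ms \<longrightarrow>
        (\<forall>l>0. backward_orbit (skew p q) (D \<times> UNIV) (Uset r l)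
               = basin (skew p q) (D \<times> UNIV) (0, 0)
                 - backward_orbit (skew p q) (D \<times> UNIV) {x \<in> D \<times> UNIV. fst x = 0})) \<and>
     (ms < real \<delta> \<and> (n1, m1) \<noteq> (0, real \<delta>) \<longrightarrow>
        (\<forall>l. 0 < l \<and> l < ns / (real \<delta> - ms) \<longrightarrow>
            backward_orbit (skew p q) (D \<times> UNIV) (Uset r l)
               = basin (skew p q) (D \<times> UNIV) (0, 0)
                 - backward_orbit (skew p q) (D \<times> UNIV) {x \<in> D \<times> UNIV. fst x = 0}))"
proof -
  \<comment> \<open>of the hypothesis on D only that it is an open neighbourhood of 0 is needed\<close>
  have "open D" "0 \<in> D" using dom by auto
  then obtain \<epsilon> where \<epsilon>: "0 < \<epsilon>" "cball 0 \<epsilon> \<subseteq> D" using open_contains_cball by blast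
  define \<tau> where "\<tau> = min \<epsilon> (1 / 2)"
  have \<tau>_pos: "0 < \<tau>" "\<tau> < 1" and \<tau>_ball: "cball 0 \<tau> \<subseteq> D"
    using \<epsilon> unfolding \<tau>_def by auto
  have "isCont p 0"
    using p_holo \<open>open D\<close> \<open>0 \<in> D\<close> by (meson holomorphic_on_imp_continuous_on continuous_on_eq_continuous_at)
  with leading_term_bounds[OF a_nz _ _ p_expand] delta obtain \<rho> where "p 0 = 0" "0 < \<rho>"
    "\<And>z. norm z < \<rho> \<Longrightarrow> norm a / 2 * norm z ^ \<delta> \<le> norm (p z) \<and> norm (p z) \<le> 2 * norm a * norm z ^ \<delta>"
    by auto
  then interpret skew_near_origin p q b a \<delta> \<rho> \<tau>
    using a_nz delta \<tau>_pos \<tau>_ball q_series b00 b01 by unfold_locales auto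
  interpret newton_last_edge b ns1 ms1 ns ms
    using vs1 vs two last second_last by unfold_locales
  obtain r0 where "0 < r0" and eq: "\<And>r l. 0 < r \<Longrightarrow> r < r0 \<Longrightarrow> 0 < l
      \<Longrightarrow> \<exists>l'>l. \<exists>e>real \<delta>. weighted_order_ge b l' e
      \<Longrightarrow> backward_orbit (skew p q) (D \<times> UNIV) (Uset r l)
            = basin (skew p q) (D \<times> UNIV) (0, 0)
              - backward_orbit (skew p q) (D \<times> UNIV) {x \<in> D \<times> UNIV. fst x = 0}"
    using backward_orbit_Uset_eq[OF \<tau>_ball] by blast
  have b0: "b 0 \<delta> = 0" if "(n1, m1) \<noteq> (0, real \<delta>)"
    using case2_delta_exponent_is_first_vertex[OF case2 v1 first] that by blast
  show ?thesis
    by (intro exI[of _ r0] conjI allI impI \<open>0 < r0\<close>; rule eq;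
        auto intro: weighted_order_gap_if_delta_le weighted_order_gap_if_delta_gt[OF case2] b0)
qed

end
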